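(* For every integer $k \geq 2$, the Nyldon factorization of the Fibonacci word $F_k$ is the two-term sequence $a,\ F_k[2..f_k]$. That is, $F_k = a\cdot F_k[2..f_k]$, both $a$ and $F_k[2..f_k]$ are Nyldon words, and $a \preceq F_k[2..f_k]$.
   Context: Strings are over the binary alphabet $\{a,b\}$ ordered by $a \prec b$, and $\prec$ also denotes the induced lexicographic order on strings: $x \prec y$ iff $x$ is a proper prefix of $y$, or there is $i$ with $x[1..i-1]=y[1..i-1]$ and $x[i]\prec y[i]$; $x\preceq y$ means $x\prec y$ or $x=y$. For a string $w$, $w[i..j]$ denotes the substring from position $i$ to position $j$ (1-indexed). Nyldon words are defined recursively: every string of length $1$ is a Nyldon word; a string $w$ with $|w|\ge 2$ is a Nyldon word iff there is no factorization $w=\gamma_1\cdots\gamma_m$ with $m\ge 2$, each $\gamma_i$ a nonempty Nyldon word, and $\gamma_1\preceq\gamma_2\preceq\cdots\preceq\gamma_m$. Every nonempty string $w$ has a unique factorization $w=\gamma_1\cdots\gamma_m$ into Nyldon words with $\gamma_i\preceq\gamma_{i+1}$ for all $i$; it is called the Nyldon factorization of $w$. Fibonacci words: $F_0=b$, $F_1=a$, $F_k=F_{k-1}F_{k-2}$ for $k\ge 2$; $f_k=|F_k|$. *)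

theory Defs
  imports Main
begin

datatype letter = A | B

definition letter_less :: "letter \<Rightarrow> letter \<Rightarrow> bool" where
  "letter_less x y \<longleftrightarrow> x = A \<and> y = B"

fun lex_less :: "letter list \<Rightarrow> letter list \<Rightarrow> bool" where
  "lex_less [] [] = False"
| "lex_less [] (y # ys) = True"
| "lex_less (x # xs) [] = False"
| "lex_less (x # xs) (y # ys) = (letter_less x y \<or> (x = y \<and> lex_less xs ys))"

definition lex_le :: "letter list \<Rightarrow> letter list \<Rightarrow> bool" where
  "lex_le x y \<longleftrightarrow> lex_less x y \<or> x = y"

text \<open>nyl n w: w is a Nyldon word of length at most n (recursion on the length bound).\<close>
fun nyl :: "nat \<Rightarrow> letter list \<Rightarrow> bool" where
  "nyl 0 w = False"
| "nyl (Suc n) w =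
     (w \<noteq> [] \<and> length w \<le> Suc n \<and>
      (length w = 1 \<or>
       \<not> (\<exists>gs. length gs \<ge> 2 \<and> concat gs = w \<and>
              (\<forall>g\<in>set gs. g \<noteq> [] \<and> nyl n g) \<and> successively lex_le gs)))"

definition nyldon :: "letter list \<Rightarrow> bool" where
  "nyldon w \<longleftrightarrow> nyl (length w) w"

fun fib_word :: "nat \<Rightarrow> letter list" where
  "fib_word 0 = [B]"
| "fib_word (Suc 0) = [A]"
| "fib_word (Suc (Suc k)) = fib_word (Suc k) @ fib_word k"

end

theory Submission
  imports Defs
begin

(* Write u = F_k[2..f_k]; since F_k begins with a and [a] is the least nonempty word, everything
   reduces to u being a Nyldon word. The engine is a gluing criterion: if p and v are Nyldon words,
   v < p, and every proper Nyldon suffix of p is at most v, then pv is Nyldon, and again every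
   proper Nyldon suffix of pv is at most v. It rests on two facts about Nyldon words, proved by a
   joint induction on the length: a proper Nyldon suffix of a Nyldon word is smaller than the word,
   and the last factor of a Nyldon factorization is its longest Nyldon suffix.
   The rotations x_n of F_(n+1) that move the leading a to the end satisfy x_(n+2) = x_(n+1) x_n
   with x_0 = a < x_1 = ba, so gluing shows that every x_n is Nyldon. Finally
   F_(k+4)[2..] = x_(k+2) F_(k+2)[2..], and gluing applies once more. *)

lemma lex_less_irrefl [simp]: "\<not> lex_less x x"
  by (induction x) (auto simp: letter_less_def)

lemma lex_less_trans: "lex_less x y \<Longrightarrow> lex_less y z \<Longrightarrow> lex_less x z"
proof (induction x arbitrary: y z)
  case Nil
  then show ?case by (cases y; cases z) auto
next
  case (Cons a x)
  then show ?case by (cases y; cases z) (auto simp: letter_less_def)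
qed

lemma lex_less_linear: "x \<noteq> y \<Longrightarrow> lex_less x y \<or> lex_less y x"
proof (induction x arbitrary: y)
  case Nil
  then show ?case by (cases y) auto
next
  case (Cons a x)
  show ?case
  proof (cases y)
    case (Cons b ys)
    then show ?thesis
      using Cons.IH[of ys] Cons.prems by (cases a; cases b) (auto simp: letter_less_def)
  qed simp
qed

lemma lex_less_append: "y \<noteq> [] \<Longrightarrow> lex_less x (x @ y)"
  by (induction x) (cases y, auto)+

lemma lex_le_append: "lex_le x (x @ y)"
  using lex_less_append unfolding lex_le_def by (cases "y = []") auto

lemma lex_le_trans: "lex_le x y \<Longrightarrow> lex_le y z \<Longrightarrow> lex_le x z"
  unfolding lex_le_def using lex_less_trans by blast

lemma not_lex_le: "\<not> lex_le x y \<longleftrightarrow> lex_less y x"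
  unfolding lex_le_def using lex_less_linear lex_less_trans lex_less_irrefl by blast

lemma length_less_length_concat:
  assumes "2 \<le> length gs" "\<forall>h\<in>set gs. h \<noteq> []" "g \<in> set gs"
  shows "length g < length (concat gs)"
proof -
  obtain xs ys where gs: "gs = xs @ g # ys"
    using \<open>g \<in> set gs\<close> by (meson split_list)
  with \<open>2 \<le> length gs\<close> have "xs @ ys \<noteq> []"
    by auto
  then obtain h where h: "h \<in> set (xs @ ys)"
    by (meson ex_in_conv set_empty)
  then have "0 < length h"
    using assms(2) gs by auto
  moreover have "length h \<le> sum_list (map length (xs @ ys))"
    using h by (intro member_le_sum_list) auto
  ultimately show ?thesis
    using gs by (simp add: length_concat del: length_greater_0_conv add_gr_0)
qed

lemma nyl_bound_cong: "length w \<le> m \<Longrightarrow> length w \<le> n \<Longrightarrow> nyl m w = nyl n w"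
proof (induction m arbitrary: w n)
  case 0
  then show ?case by (cases n) auto
next
  case (Suc m)
  show ?case
  proof (cases n)
    case (Suc n')
    have "(\<forall>g\<in>set gs. g \<noteq> [] \<and> nyl m g) \<longleftrightarrow> (\<forall>g\<in>set gs. g \<noteq> [] \<and> nyl n' g)"
      if "2 \<le> length gs" "concat gs = w" for gs
    proof -
      have "nyl m g = nyl n' g" if "g \<in> set gs" "\<forall>h\<in>set gs. h \<noteq> []" for g
      proof -
        have "length g < length w"
          using length_less_length_concat \<open>2 \<le> length gs\<close> \<open>concat gs = w\<close> that by blast
        then show ?thesis
          using Suc.IH Suc.prems \<open>n = Suc n'\<close> by simp
      qed
      then show ?thesis by blast
    qed
    then show ?thesis
      using Suc.prems \<open>n = Suc n'\<close> by (simp only: nyl.simps) (metis (no_types, lifting))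
  qed (use Suc.prems in auto)
qed

definition nyldon_factorization :: "letter list list \<Rightarrow> bool" where
  "nyldon_factorization gs \<longleftrightarrow> (\<forall>g\<in>set gs. nyldon g) \<and> successively lex_le gs"

lemma nyldon_factorization_append_iff:
  "nyldon_factorization (xs @ ys) \<longleftrightarrow> nyldon_factorization xs \<and> nyldon_factorization ys \<and>
     (xs = [] \<or> ys = [] \<or> lex_le (last xs) (hd ys))"
  unfolding nyldon_factorization_def by (auto simp: successively_append_iff)

lemma nyldon_factorization_butlast:
  assumes "nyldon_factorization gs" "gs \<noteq> []"
  shows "nyldon_factorization (butlast gs)" "nyldon (last gs)"
    and "butlast gs \<noteq> [] \<Longrightarrow> lex_le (last (butlast gs)) (last gs)"
  using nyldon_factorization_append_iff[of "butlast gs" "[last gs]"] assms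
  by (auto simp: nyldon_factorization_def)

lemma nyldon_not_Nil: "nyldon w \<Longrightarrow> w \<noteq> []"
  unfolding nyldon_def by (cases w) auto

lemma nyldon_factorization_concat_not_Nil:
  "nyldon_factorization gs \<Longrightarrow> gs \<noteq> [] \<Longrightarrow> concat gs \<noteq> []"
  using nyldon_not_Nil by (cases gs) (auto simp: nyldon_factorization_def)

lemma nyldon_iff:
  "nyldon w \<longleftrightarrow> w \<noteq> [] \<and>
     (length w = 1 \<or> \<not> (\<exists>gs. 2 \<le> length gs \<and> concat gs = w \<and> nyldon_factorization gs))"
proof (cases w)
  case (Cons x xs)
  have factors_iff: "(\<forall>g\<in>set gs. g \<noteq> [] \<and> nyl (length xs) g) \<longleftrightarrow> (\<forall>g\<in>set gs. nyldon g)"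
    if "2 \<le> length gs" "concat gs = w" for gs
  proof -
    have "nyl (length xs) g = nyldon g" if "g \<in> set gs" "\<forall>h\<in>set gs. h \<noteq> []" for g
    proof -
      have "length g \<le> length xs"
        using length_less_length_concat[OF \<open>2 \<le> length gs\<close> that(2,1)] \<open>concat gs = w\<close> Cons
        by simp
      then show ?thesis
        unfolding nyldon_def using nyl_bound_cong[of g "length xs" "length g"] by simp
    qed
    then show ?thesis
      using nyldon_not_Nil by blast
  qed
  have "nyldon w = nyl (Suc (length xs)) w"
    using Cons by (simp add: nyldon_def)
  then show ?thesis
    using factors_iff Cons unfolding nyldon_factorization_def
    by (simp only: nyl.simps) (metis (no_types, lifting) le_refl length_Cons)
qed (simp add: nyldon_def)

lemma nyldon_singleton: "nyldon [x]"
  by (simp add: nyldon_iff)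

lemma nyldon_factorization_of_nyldon:
  assumes "nyldon w" "concat gs = w" "nyldon_factorization gs" "gs \<noteq> []"
  shows "gs = [w]"
proof (rule ccontr)
  assume "gs \<noteq> [w]"
  with assms(2,4) have "2 \<le> length gs"
    by (cases gs; cases "tl gs") auto
  moreover have "length w \<noteq> 1"
  proof -
    obtain g where "g \<in> set gs"
      using assms(4) by fastforce
    then have "0 < length g" "length g < length w"
      using length_less_length_concat[OF \<open>2 \<le> length gs\<close>] assms nyldon_not_Nil
      unfolding nyldon_factorization_def by auto
    then show ?thesis
      by linarith
  qed
  ultimately show False
    using assms nyldon_iff by blast
qed

lemma nyldon_factorization_exists:
  assumes "w \<noteq> []"
  shows "\<exists>gs. gs \<noteq> [] \<and> concat gs = w \<and> nyldon_factorization gs"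
proof (cases "nyldon w")
  case True
  then show ?thesis
    by (intro exI[of _ "[w]"]) (simp add: nyldon_factorization_def)
next
  case False
  then show ?thesis
    using assms nyldon_iff by fastforce
qed

lemma append_eq_append_suffixE:
  assumes "p @ s = q @ t" "length s \<le> length t"
  obtains r where "t = r @ s" "p = q @ r"
  using assms by (auto simp: append_eq_append_conv2)

lemma concat_butlast_last: "gs \<noteq> [] \<Longrightarrow> concat gs = concat (butlast gs) @ last gs"
  by (metis append_butlast_last_id concat_append concat.simps append_Nil2)

lemma nyldon_split_less:
  assumes "nyldon w" "w = concat xs @ concat ys"
    and "nyldon_factorization xs" "nyldon_factorization ys" "xs \<noteq> []" "ys \<noteq> []"
  shows "lex_less (hd ys) (last xs)"
proof (rule ccontr)
  assume "\<not> lex_less (hd ys) (last xs)"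
  then have "nyldon_factorization (xs @ ys)"
    using assms(3-6) not_lex_le nyldon_factorization_append_iff by blast
  then have "xs @ ys = [w]"
    using nyldon_factorization_of_nyldon assms(1,2,5) by simp
  then show False
    using assms(5,6) by (cases xs) auto
qed

corollary nyldon_suffix_less_last_factor:
  assumes "nyldon w" "w = concat xs @ s" "nyldon_factorization xs" "xs \<noteq> []" "nyldon s"
  shows "lex_less s (last xs)"
  using nyldon_split_less[of w xs "[s]"] assms by (simp add: nyldon_factorization_def)

definition proper_nyldon_suffixes_less :: "letter list \<Rightarrow> bool" where
  "proper_nyldon_suffixes_less g \<longleftrightarrow> (\<forall>p s. g = p @ s \<longrightarrow> p \<noteq> [] \<longrightarrow> nyldon s \<longrightarrow> lex_less s g)"

lemma nyldon_factorization_suffix_last_le: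
  assumes "proper_nyldon_suffixes_less g" "nyldon g" "g = p @ s" "s \<noteq> []"
  obtains ds where "ds \<noteq> []" "concat ds = s" "nyldon_factorization ds" "lex_le (last ds) g"
proof (cases "p = []")
  case True
  then show ?thesis
    using that[of "[g]"] assms(2,3) by (simp add: nyldon_factorization_def lex_le_def)
next
  case False
  obtain ds where ds: "ds \<noteq> []" "concat ds = s" "nyldon_factorization ds"
    using nyldon_factorization_exists assms(4) by blast
  then have "g = (p @ concat (butlast ds)) @ last ds" "nyldon (last ds)"
    using assms(3) concat_butlast_last[of ds] nyldon_factorization_butlast(2) by simp_all
  then have "lex_less (last ds) g"
    using assms(1) False unfolding proper_nyldon_suffixes_less_def by blast
  then show ?thesis
    using that ds lex_le_def by blast
qed

text \<open>The hypothesis on the factors makes this usable inside the induction that establishes it for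
  all Nyldon words.\<close>

lemma length_suffix_le_last_factor_if_suffixes_less:
  assumes "\<forall>g\<in>set gs. proper_nyldon_suffixes_less g" "nyldon_factorization gs" "gs \<noteq> []"
    and "concat gs = p @ s" "nyldon s"
  shows "length s \<le> length (last gs)"
  using assms
proof (induction gs arbitrary: p)
  case Nil
  then show ?case by simp
next
  case (Cons g gs)
  show ?case
  proof (cases "gs = []")
    case True
    then show ?thesis
      using Cons.prems(4) by auto
  next
    case gs_not_Nil: False
    have g: "nyldon g" "lex_le g (hd gs)" and gs: "nyldon_factorization gs"
      using Cons.prems(2) gs_not_Nil nyldon_factorization_append_iff[of "[g]" gs]
      by (auto simp: nyldon_factorization_def)
    show ?thesis
    proof (cases "length s \<le> length (concat gs)")
      case True
      obtain r where "concat gs = r @ s"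
        using append_eq_append_suffixE[of p s g "concat gs"] Cons.prems(4) True by auto
      then show ?thesis
        using Cons.IH[of r] Cons.prems gs gs_not_Nil by simp
    next
      case False
      obtain s' where s': "s = s' @ concat gs" "g = p @ s'"
        using append_eq_append_suffixE[of g "concat gs" p s] Cons.prems(4) False by auto
      with False have "s' \<noteq> []"
        by auto
      obtain ds where ds: "ds \<noteq> []" "concat ds = s'" "nyldon_factorization ds" "lex_le (last ds) g"
        using nyldon_factorization_suffix_last_le[of g p s'] Cons.prems(1) g(1) s' \<open>s' \<noteq> []\<close>
        by auto
      have "lex_less (hd gs) (last ds)"
        using nyldon_split_less[OF \<open>nyldon s\<close>, of ds gs] ds s' gs gs_not_Nil by simp
      then show ?thesis
        using ds(4) g(2) lex_le_trans not_lex_le by blast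
    qed
  qed
qed

lemma nyldon_factorization_last_neq:
  assumes "nyldon u" "lex_less v u" "concat cs = u @ v" "nyldon_factorization cs" "cs \<noteq> []"
  shows "last cs \<noteq> v"
proof
  assume last: "last cs = v"
  then have u: "concat (butlast cs) = u"
    using assms(3,5) concat_butlast_last[of cs] by simp
  then have "butlast cs \<noteq> []"
    using nyldon_not_Nil[OF assms(1)] by auto
  then have "butlast cs = [u]" "lex_le (last (butlast cs)) v"
    using nyldon_factorization_of_nyldon[OF assms(1) u] nyldon_factorization_butlast[OF assms(4,5)] last
    by auto
  then show False
    using assms(2) not_lex_le by auto
qed

lemma not_nyldon_last_factor_append:
  assumes "nyldon g" "g = concat ps @ s" "nyldon_factorization ps" "butlast ps \<noteq> []" "nyldon s"
  shows "\<not> nyldon (last ps @ s)"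
proof
  assume "nyldon (last ps @ s)"
  have "ps \<noteq> []"
    using assms(4) by auto
  then have "g = concat (butlast ps) @ (last ps @ s)"
    using assms(2) concat_butlast_last[of ps] by simp
  then have "lex_less (last ps @ s) (last (butlast ps))"
    using nyldon_suffix_less_last_factor[OF assms(1)] nyldon_factorization_butlast(1)[OF assms(3)]
      \<open>ps \<noteq> []\<close> assms(4) \<open>nyldon (last ps @ s)\<close> by blast
  moreover have "lex_le (last (butlast ps)) (last ps @ s)"
    using lex_le_trans[OF nyldon_factorization_butlast(3)[OF assms(3) \<open>ps \<noteq> []\<close> assms(4)]
        lex_le_append] .
  ultimately show False
    using not_lex_le by blast
qed

lemma nyldon_extend_suffix:
  assumes IH: "\<And>h. length h < length (u @ s) \<Longrightarrow> nyldon h \<Longrightarrow> proper_nyldon_suffixes_less h"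
    and "nyldon u" "nyldon s" "lex_less s u" "\<not> nyldon (u @ s)"
  obtains r t where "u = r @ t" "t \<noteq> []" "nyldon (t @ s)" "lex_less s (t @ s)"
proof -
  obtain cs where cs: "2 \<le> length cs" "concat cs = u @ s" "nyldon_factorization cs"
    using assms(5) nyldon_iff nyldon_not_Nil[OF assms(3)] by auto
  then have "cs \<noteq> []"
    by auto
  have "\<forall>h\<in>set cs. proper_nyldon_suffixes_less h"
  proof
    fix h
    assume "h \<in> set cs"
    moreover have "\<forall>h\<in>set cs. h \<noteq> []"
      using cs(3) nyldon_not_Nil by (auto simp: nyldon_factorization_def)
    ultimately have "length h < length (u @ s)"
      using length_less_length_concat[OF cs(1)] cs(2) by metis
    then show "proper_nyldon_suffixes_less h"
      using IH cs(3) \<open>h \<in> set cs\<close> by (simp add: nyldon_factorization_def)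
  qed
  then have last_suffixes: "proper_nyldon_suffixes_less (last cs)" and "length s \<le> length (last cs)"
    using length_suffix_le_last_factor_if_suffixes_less[of cs u s] cs assms(3) \<open>cs \<noteq> []\<close>
    by auto
  moreover have "u @ s = concat (butlast cs) @ last cs"
    using cs(2) concat_butlast_last[OF \<open>cs \<noteq> []\<close>] by simp
  ultimately obtain t where t: "last cs = t @ s" "u = concat (butlast cs) @ t"
    using append_eq_append_suffixE by metis
  moreover have "t \<noteq> []"
    using nyldon_factorization_last_neq[OF assms(2,4) cs(2,3) \<open>cs \<noteq> []\<close>] t by auto
  moreover have "nyldon (last cs)"
    using nyldon_factorization_butlast(2)[OF cs(3) \<open>cs \<noteq> []\<close>] .
  moreover have "lex_less s (last cs)"
    using last_suffixes t \<open>t \<noteq> []\<close> assms(3) unfolding proper_nyldon_suffixes_less_def by blast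
  ultimately show thesis
    using that by simp
qed

text \<open>The second alternative gives a Nyldon suffix \<open>c > s\<close> of \<open>g\<close> that starts inside \<open>p\<close>,
  so that induction on \<open>length p\<close> yields \<open>c < g\<close>.\<close>

lemma nyldon_proper_suffix_less_step:
  assumes IH: "\<And>h. length h < length g \<Longrightarrow> nyldon h \<Longrightarrow> proper_nyldon_suffixes_less h"
    and "nyldon g" "g = p @ s" "p \<noteq> []" "nyldon s"
  shows "lex_less s p \<or>
    (\<exists>p' c. g = p' @ c \<and> p' \<noteq> [] \<and> length p' < length p \<and> nyldon c \<and> lex_less s c)"
proof -
  obtain ps where ps: "ps \<noteq> []" "concat ps = p" "nyldon_factorization ps"
    using nyldon_factorization_exists assms(4) by blast
  have "nyldon (last ps)"
    using nyldon_factorization_butlast(2)[OF ps(3,1)] .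
  have s_less_last: "lex_less s (last ps)"
    using nyldon_suffix_less_last_factor[OF assms(2)] ps assms(3,5) by simp
  have p: "p = concat (butlast ps) @ last ps"
    using ps concat_butlast_last[of ps] by simp
  show ?thesis
  proof (cases "butlast ps = []")
    case True
    then show ?thesis
      using p s_less_last by simp
  next
    case False
    then have "concat (butlast ps) \<noteq> []"
      using nyldon_factorization_concat_not_Nil nyldon_factorization_butlast(1)[OF ps(3,1)] by blast
    then have "length (last ps @ s) < length g"
      using assms(3) p by simp
    moreover have "\<not> nyldon (last ps @ s)"
      using not_nyldon_last_factor_append[OF assms(2) _ ps(3) False assms(5)] assms(3) ps(2) by blast
    ultimately obtain r t where "last ps = r @ t" "t \<noteq> []" "nyldon (t @ s)" "lex_less s (t @ s)"
      using nyldon_extend_suffix[OF _ \<open>nyldon (last ps)\<close> assms(5) s_less_last] IH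
      by (metis order.strict_trans)
    moreover have "g = (concat (butlast ps) @ r) @ (t @ s)"
      using assms(3) p calculation(1) by simp
    ultimately show ?thesis
      using \<open>concat (butlast ps) \<noteq> []\<close> p
      by (intro disjI2 exI[of _ "concat (butlast ps) @ r"] exI[of _ "t @ s"]) auto
  qed
qed

lemma nyldon_imp_proper_nyldon_suffixes_less: "nyldon g \<Longrightarrow> proper_nyldon_suffixes_less g"
proof (induction "length g" arbitrary: g rule: less_induct)
  case less
  note shorter_words = less.hyps
  have "lex_less s g" if "g = p @ s" "p \<noteq> []" "nyldon s" for p s
    using that
  proof (induction "length p" arbitrary: p s rule: less_induct)
    case (less p s)
    have "s \<noteq> []"
      using less.prems(3) nyldon_not_Nil by blast
    consider "lex_less s p" | p' c where "g = p' @ c" "p' \<noteq> []" "length p' < length p"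
      "nyldon c" "lex_less s c"
      using nyldon_proper_suffix_less_step[OF shorter_words \<open>nyldon g\<close> less.prems] by blast
    then show ?case
    proof cases
      case 1
      then show ?thesis
        using lex_less_trans lex_less_append[OF \<open>s \<noteq> []\<close>] less.prems(1) by blast
    next
      case 2
      then have "lex_less c g"
        using less.hyps by blast
      then show ?thesis
        using lex_less_trans \<open>lex_less s c\<close> by blast
    qed
  qed
  then show ?case
    unfolding proper_nyldon_suffixes_less_def by blast
qed

corollary nyldon_proper_suffix_less:
  "nyldon g \<Longrightarrow> g = p @ s \<Longrightarrow> p \<noteq> [] \<Longrightarrow> nyldon s \<Longrightarrow> lex_less s g"
  using nyldon_imp_proper_nyldon_suffixes_less unfolding proper_nyldon_suffixes_less_def by blast

corollary length_suffix_le_last_factor: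
  assumes "nyldon_factorization gs" "gs \<noteq> []" "concat gs = p @ s" "nyldon s"
  shows "length s \<le> length (last gs)"
  using length_suffix_le_last_factor_if_suffixes_less assms nyldon_imp_proper_nyldon_suffixes_less
  by (auto simp: nyldon_factorization_def)

definition proper_nyldon_suffixes_le :: "letter list \<Rightarrow> letter list \<Rightarrow> bool" where
  "proper_nyldon_suffixes_le p v \<longleftrightarrow>
     (\<forall>q \<delta>. p = q @ \<delta> \<longrightarrow> q \<noteq> [] \<longrightarrow> nyldon \<delta> \<longrightarrow> lex_le \<delta> v)"

lemma proper_nyldon_suffixes_le_singleton: "proper_nyldon_suffixes_le [x] v"
  unfolding proper_nyldon_suffixes_le_def using nyldon_not_Nil by (auto simp: Cons_eq_append_conv)

lemma proper_nyldon_suffixes_le_mono: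
  "proper_nyldon_suffixes_le p v \<Longrightarrow> lex_le v w \<Longrightarrow> proper_nyldon_suffixes_le p w"
  unfolding proper_nyldon_suffixes_le_def using lex_le_trans by blast

lemma length_nyldon_suffix_append_le:
  assumes "nyldon v" "proper_nyldon_suffixes_le p v" "p @ v = q @ \<delta>" "q \<noteq> []" "nyldon \<delta>"
  shows "length \<delta> \<le> length v"
proof (rule ccontr)
  assume longer: "\<not> length \<delta> \<le> length v"
  then have "length v \<le> length \<delta>"
    by simp
  then obtain t where t: "\<delta> = t @ v" "p = q @ t"
    by (rule append_eq_append_suffixE[OF assms(3)])
  with longer have "t \<noteq> []"
    by auto
  then obtain ds where ds: "ds \<noteq> []" "concat ds = t" "nyldon_factorization ds"
    using nyldon_factorization_exists by blast
  then have "p = (q @ concat (butlast ds)) @ last ds" "nyldon (last ds)"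
    using t concat_butlast_last[of ds] by (auto simp: nyldon_factorization_def)
  then have "lex_le (last ds) v"
    using assms(2,4) unfolding proper_nyldon_suffixes_le_def by blast
  moreover have "lex_less v (last ds)"
    using nyldon_suffix_less_last_factor[OF assms(5)] t ds assms(1) by simp
  ultimately show False
    using not_lex_le by blast
qed

lemma proper_nyldon_suffixes_le_append:
  assumes "nyldon v" "proper_nyldon_suffixes_le p v"
  shows "proper_nyldon_suffixes_le (p @ v) v"
  unfolding proper_nyldon_suffixes_le_def
proof (intro allI impI)
  fix q \<delta>
  assume "p @ v = q @ \<delta>" "q \<noteq> []" "nyldon \<delta>"
  then have "length \<delta> \<le> length v"
    using length_nyldon_suffix_append_le assms by blast
  then obtain r where r: "v = r @ \<delta>"
    using append_eq_append_suffixE[of q \<delta> p v] \<open>p @ v = q @ \<delta>\<close> by metis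
  show "lex_le \<delta> v"
  proof (cases "r = []")
    case False
    then show ?thesis
      using nyldon_proper_suffix_less[OF assms(1) r False \<open>nyldon \<delta>\<close>] lex_le_def by blast
  qed (use r lex_le_def in simp)
qed

lemma nyldon_append:
  assumes "nyldon p" "nyldon v" "lex_less v p" "proper_nyldon_suffixes_le p v"
  shows "nyldon (p @ v)"
proof -
  have "\<not> (2 \<le> length gs \<and> concat gs = p @ v \<and> nyldon_factorization gs)" for gs
  proof
    assume gs: "2 \<le> length gs \<and> concat gs = p @ v \<and> nyldon_factorization gs"
    then have "gs \<noteq> []"
      by auto
    have "\<forall>h\<in>set gs. h \<noteq> []"
      using gs nyldon_not_Nil by (auto simp: nyldon_factorization_def)
    then have "length (last gs) < length (concat gs)"
      using length_less_length_concat[OF _ _ last_in_set] gs \<open>gs \<noteq> []\<close> by blast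
    then have "concat (butlast gs) \<noteq> []"
      using concat_butlast_last[OF \<open>gs \<noteq> []\<close>] by auto
    moreover have split: "p @ v = concat (butlast gs) @ last gs"
      using gs concat_butlast_last[OF \<open>gs \<noteq> []\<close>] by simp
    ultimately have "length (last gs) \<le> length v"
      using length_nyldon_suffix_append_le[OF assms(2,4)] gs \<open>gs \<noteq> []\<close>
      by (simp add: nyldon_factorization_def)
    moreover have "length v \<le> length (last gs)"
      using length_suffix_le_last_factor[of gs p v] gs \<open>gs \<noteq> []\<close> assms(2) by simp
    ultimately have "length v = length (last gs)"
      by linarith
    then have "last gs = v"
      using split append_eq_append_conv[of p "concat (butlast gs)" v "last gs"] by blast
    then show False
      using nyldon_factorization_last_neq[OF assms(1,3)] gs \<open>gs \<noteq> []\<close> by blast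
  qed
  moreover have "p @ v \<noteq> []"
    using nyldon_not_Nil[OF assms(1)] by simp
  ultimately show ?thesis
    using nyldon_iff[of "p @ v"] by blast
qed

lemma nyldon_fibonacci_sequence:
  assumes rec: "\<And>n. x (Suc (Suc n)) = x (Suc n) @ x n"
    and "nyldon (x 0)" "nyldon (x 1)" "lex_less (x 0) (x 1)"
    and "proper_nyldon_suffixes_le (x 1) (x 0)"
  shows "nyldon (x n) \<and> nyldon (x (Suc n)) \<and> lex_less (x n) (x (Suc n)) \<and>
    proper_nyldon_suffixes_le (x (Suc n)) (x n)"
proof (induction n)
  case 0
  then show ?case
    using assms by simp
next
  case (Suc n)
  then have "nyldon (x (Suc (Suc n)))"
    using nyldon_append rec by simp
  moreover have "lex_less (x (Suc n)) (x (Suc (Suc n)))"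
    using lex_less_append nyldon_not_Nil Suc rec by simp
  moreover have "proper_nyldon_suffixes_le (x (Suc (Suc n))) (x (Suc n))"
    using proper_nyldon_suffixes_le_append proper_nyldon_suffixes_le_mono Suc rec lex_le_def
    by metis
  ultimately show ?case
    using Suc by simp
qed

lemma fib_word_Suc_Cons: "\<exists>u. fib_word (Suc k) = A # u"
  by (induction k) auto

lemma tl_fib_word_rec:
  "tl (fib_word (Suc (Suc (Suc k)))) = tl (fib_word (Suc (Suc k))) @ A # tl (fib_word (Suc k))"
proof -
  obtain u v where "fib_word (Suc (Suc k)) = A # u" "fib_word (Suc k) = A # v"
    using fib_word_Suc_Cons by metis
  then show ?thesis
    by simp
qed

definition fib_rot :: "nat \<Rightarrow> letter list" where
  "fib_rot n = rotate1 (fib_word (Suc n))"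

lemma fib_rot_eq: "fib_rot n = tl (fib_word (Suc n)) @ [A]"
  unfolding fib_rot_def using fib_word_Suc_Cons[of n] by auto

lemma fib_rot_rec: "fib_rot (Suc (Suc n)) = fib_rot (Suc n) @ fib_rot n"
  unfolding fib_rot_eq using tl_fib_word_rec by simp

lemma tl_fib_word_eq_fib_rot_append:
  "tl (fib_word (Suc (Suc (Suc k)))) = fib_rot (Suc k) @ tl (fib_word (Suc k))"
  unfolding fib_rot_eq using tl_fib_word_rec by simp

lemma fib_rot_le_tl_fib_word: "lex_le (fib_rot k) (tl (fib_word (Suc (Suc k))))"
proof (cases k)
  case 0
  then show ?thesis
    by (simp add: fib_rot_def lex_le_def letter_less_def)
next
  case (Suc j)
  then show ?thesis
    using tl_fib_word_eq_fib_rot_append lex_le_append by simp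
qed

lemma nyldon_fib_rot:
  "nyldon (fib_rot n) \<and> proper_nyldon_suffixes_le (fib_rot (Suc (Suc n))) (fib_rot n)"
proof -
  have "lex_less [A] [B]"
    by (simp add: letter_less_def)
  then have "nyldon ([B] @ [A])"
    by (rule nyldon_append[OF nyldon_singleton nyldon_singleton _ proper_nyldon_suffixes_le_singleton])
  moreover have "proper_nyldon_suffixes_le ([B] @ [A]) [A]"
    by (rule proper_nyldon_suffixes_le_append[OF nyldon_singleton proper_nyldon_suffixes_le_singleton])
  moreover have "fib_rot 0 = [A]" "fib_rot 1 = [B, A]"
    by (simp_all add: fib_rot_def)
  ultimately have "nyldon (fib_rot n) \<and> nyldon (fib_rot (Suc n)) \<and>
      proper_nyldon_suffixes_le (fib_rot (Suc n)) (fib_rot n)"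
    using nyldon_fibonacci_sequence[of fib_rot, OF fib_rot_rec] nyldon_singleton
    by (simp add: letter_less_def)
  then show ?thesis
    using proper_nyldon_suffixes_le_append fib_rot_rec by simp
qed

lemma nyldon_tl_fib_word: "nyldon (tl (fib_word (Suc (Suc k))))"
proof (induction k rule: fib_word.induct)
  case 1
  then show ?case
    using nyldon_singleton by simp
next
  case 2
  then show ?case
    using nyldon_fib_rot[of 1] by (simp add: fib_rot_def)
next
  case (3 k)
  let ?p = "fib_rot (Suc (Suc k))" and ?v = "tl (fib_word (Suc (Suc k)))"
  have "?p = ?v @ A # tl (fib_word (Suc k)) @ [A]"
    using fib_rot_eq tl_fib_word_rec by simp
  then have "lex_less ?v ?p"
    using lex_less_append by simp
  moreover have "proper_nyldon_suffixes_le ?p ?v"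
    using nyldon_fib_rot[of k] fib_rot_le_tl_fib_word[of k]
    by (blast intro: proper_nyldon_suffixes_le_mono)
  ultimately have "nyldon (?p @ ?v)"
    using nyldon_append[of ?p ?v] nyldon_fib_rot[of "Suc (Suc k)"] "3.IH" by blast
  then show ?case
    by (simp only: tl_fib_word_eq_fib_rot_append)
qed

lemma lex_le_singleton_A: "v \<noteq> [] \<Longrightarrow> lex_le [A] v"
  by (cases v; cases "hd v"; cases "tl v") (auto simp: lex_le_def letter_less_def)

theorem theorem1:
  fixes k :: nat
  assumes "k \<ge> 2"
  shows "fib_word k = [A] @ drop 1 (fib_word k) \<and> nyldon [A] \<and>
         nyldon (drop 1 (fib_word k)) \<and> lex_le [A] (drop 1 (fib_word k))"
proof -
  obtain m where k: "k = Suc (Suc m)"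
    using assms by (metis add_2_eq_Suc le_Suc_ex)
  have "fib_word k = [A] @ tl (fib_word k)"
    using fib_word_Suc_Cons[of "Suc m"] k by auto
  moreover have "nyldon (tl (fib_word k))"
    using nyldon_tl_fib_word k by simp
  ultimately show ?thesis
    using nyldon_singleton nyldon_not_Nil lex_le_singleton_A by (simp add: drop_Suc)
qed

end
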